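(* Let $P_1\subseteq P_2$ be meet semilattices with $0$ such that $P_1$ is downward closed in $P_2$. Then $P_1\subseteq P_2$ preserves finite covers and is tight; that is, the map $U\mapsto re^{-1}(U)$ identifies $\mathcal T_c(P_1)$ with an ideal of $\mathcal T_c(P_2)$, via $V^{P_1}_x\mapsto V^{P_2}_x$ for $x\in P_1$.
   Context: A meet semilattice with $0$ is a meet semilattice with least element $0$; $P_1\subseteq P_2$ means an injective meet- and $0$-preserving map identifying $P_1$ with a subset of $P_2$; downward closed means containing all elements below any of its elements. A filter of $P$ is a subset $F$ with $\emptyset\ne F\ne P$, closed upwards and under $\wedge$; $F(P)$ has the topology generated by $U_x=\{F:x\in F\}$, with basis of compact open sets $U_{(x:x_1,\dots,x_n)}=\{F:x\in F,\ x_1,\dots,x_n\notin F\}$. The tight filters $T(P)$ are the closure of the ultrafilters in $F(P)$; $V^P_{(x:x_1,\dots,x_n)}=U_{(x:x_1,\dots,x_n)}\cap T(P)$, $V^P_x=V^P_{(x:)}$. $\mathcal T_c(P)$ is the generalized Boolean algebra of compact open subsets of $T(P)$. A finite cover of $x\in P$ is a finite set of elements $\le x$ such that every $0\ne y\le x$ meets one of them nontrivially; $P_1\subseteq P_2$ preserves finite covers if every finite cover in $P_1$ of $x\in P_1$ is a finite cover of $x$ in $P_2$. In that case $re:T(P_2)\dashrightarrow T(P_1)$, $\xi\mapsto\xi\cap P_1$ (defined when nonempty), is a partial map to tight filters and $U\mapsto re^{-1}(U)$ is an injective generalized Boolean algebra morphism $\mathcal T_c(P_1)\to\mathcal T_c(P_2)$;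 $P_1\subseteq P_2$ is called tight if its image is an ideal (closed under unions and under intersection with arbitrary elements of $\mathcal T_c(P_2)$). *)

theory Defs
  imports "HOL-Analysis.Analysis"
begin

text \<open>A meet semilattice with 0 is represented as a carrier set P inside a type
  with meets and a least element, containing bot and closed under inf.\<close>

definition msl0 :: "'a::{semilattice_inf,order_bot} set \<Rightarrow> bool" where
  "msl0 P \<longleftrightarrow> bot \<in> P \<and> (\<forall>x\<in>P. \<forall>y\<in>P. inf x y \<in> P)"

definition down_closed :: "'a::order set \<Rightarrow> 'a set \<Rightarrow> bool" where
  "down_closed P1 P2 \<longleftrightarrow> (\<forall>x\<in>P1. \<forall>y\<in>P2. y \<le> x \<longrightarrow> y \<in> P1)"

definition is_filter :: "'a::semilattice_inf set \<Rightarrow> 'a set \<Rightarrow> bool" where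
  "is_filter P F \<longleftrightarrow> F \<subseteq> P \<and> F \<noteq> {} \<and> F \<noteq> P
     \<and> (\<forall>x\<in>F. \<forall>y\<in>P. x \<le> y \<longrightarrow> y \<in> F)
     \<and> (\<forall>x\<in>F. \<forall>y\<in>F. inf x y \<in> F)"

definition filters :: "'a::semilattice_inf set \<Rightarrow> 'a set set" where
  "filters P = {F. is_filter P F}"

definition Ubas :: "'a::semilattice_inf set \<Rightarrow> 'a \<Rightarrow> 'a set \<Rightarrow> 'a set set" where
  "Ubas P x xs = {F \<in> filters P. x \<in> F \<and> (\<forall>y\<in>xs. y \<notin> F)}"

definition FTop :: "'a::semilattice_inf set \<Rightarrow> 'a set topology" where
  "FTop P = subtopology
     (topology_generated_by {Ubas P x xs | x xs. x \<in> P \<and> finite xs \<and> xs \<subseteq> P})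
     (filters P)"

definition ultrafilters :: "'a::semilattice_inf set \<Rightarrow> 'a set set" where
  "ultrafilters P = {F \<in> filters P. \<forall>G\<in>filters P. F \<subseteq> G \<longrightarrow> G = F}"

definition tight :: "'a::semilattice_inf set \<Rightarrow> 'a set set" where
  "tight P = (FTop P) closure_of (ultrafilters P)"

definition TTop :: "'a::semilattice_inf set \<Rightarrow> 'a set topology" where
  "TTop P = subtopology (FTop P) (tight P)"

definition Vbas :: "'a::semilattice_inf set \<Rightarrow> 'a \<Rightarrow> 'a set \<Rightarrow> 'a set set" where
  "Vbas P x xs = Ubas P x xs \<inter> tight P"

definition Tc :: "'a::semilattice_inf set \<Rightarrow> 'a set set set" where
  "Tc P = {U. openin (TTop P) U \<and> compactin (TTop P) U}"

definition finite_cover :: "'a::{semilattice_inf,order_bot} set \<Rightarrow> 'a \<Rightarrow> 'a set \<Rightarrow> bool" where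
  "finite_cover P x C \<longleftrightarrow> finite C \<and> C \<subseteq> P \<and> (\<forall>c\<in>C. c \<le> x)
     \<and> (\<forall>y\<in>P. y \<noteq> bot \<and> y \<le> x \<longrightarrow> (\<exists>c\<in>C. inf y c \<noteq> bot))"

definition preserves_finite_covers :: "'a::{semilattice_inf,order_bot} set \<Rightarrow> 'a set \<Rightarrow> bool" where
  "preserves_finite_covers P1 P2 \<longleftrightarrow>
     (\<forall>x\<in>P1. \<forall>C. finite_cover P1 x C \<longrightarrow> finite_cover P2 x C)"

text \<open>Preimage of U under the partial map re : xi |-> xi \<inter> P1 (defined when nonempty).\<close>
definition re_pre :: "'a::semilattice_inf set \<Rightarrow> 'a set \<Rightarrow> 'a set set \<Rightarrow> 'a set set" where
  "re_pre P1 P2 U = {\<xi> \<in> tight P2. \<xi> \<inter> P1 \<noteq> {} \<and> \<xi> \<inter> P1 \<in> U}"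

definition tight_inclusion :: "'a::{semilattice_inf,order_bot} set \<Rightarrow> 'a set \<Rightarrow> bool" where
  "tight_inclusion P1 P2 \<longleftrightarrow>
     (\<forall>\<xi>\<in>tight P2. \<xi> \<inter> P1 \<noteq> {} \<longrightarrow> \<xi> \<inter> P1 \<in> tight P1)
   \<and> (\<forall>U\<in>Tc P1. re_pre P1 P2 U \<in> Tc P2)
   \<and> inj_on (re_pre P1 P2) (Tc P1)
   \<and> (\<forall>A\<in>re_pre P1 P2 ` Tc P1. \<forall>B\<in>re_pre P1 P2 ` Tc P1. A \<union> B \<in> re_pre P1 P2 ` Tc P1)
   \<and> (\<forall>A\<in>re_pre P1 P2 ` Tc P1. \<forall>W\<in>Tc P2. A \<inter> W \<in> re_pre P1 P2 ` Tc P1)"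

end

theory Submission imports Defs begin

text \<open>Because \<open>P\<^sub>1\<close> is downward closed in \<open>P\<^sub>2\<close>, every filter of \<open>P\<^sub>2\<close> meeting \<open>P\<^sub>1\<close>
  is the upward closure of its trace on \<open>P\<^sub>1\<close>. So restriction and upward closure are inverse
  bijections between the filters of \<open>P\<^sub>1\<close> and the filters of \<open>P\<^sub>2\<close> meeting \<open>P\<^sub>1\<close>; they preserve
  ultrafilters and, up to replacing the excluded elements \<open>w\<close> by \<open>x \<sqinter> w\<close>, the basic open sets.
  Hence upward closure is a homeomorphism of \<open>T(P\<^sub>1)\<close> onto the open set of tight filters of
  \<open>P\<^sub>2\<close> meeting \<open>P\<^sub>1\<close>, and \<open>re\<^sup>-\<^sup>1\<close> is the induced map on compact open sets. Its image is an
  ideal because compact open subsets of the Hausdorff space \<open>T(P\<^sub>2)\<close> are closed under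
  intersection.\<close>

definition Ubas_basis :: "'a::semilattice_inf set \<Rightarrow> 'a set set set" where
  "Ubas_basis P = {Ubas P x xs | x xs. x \<in> P \<and> finite xs \<and> xs \<subseteq> P}"

lemma FTop_Ubas_basis: "FTop P = subtopology (topology_generated_by (Ubas_basis P)) (filters P)"
  by (simp add: FTop_def Ubas_basis_def)

lemma bot_notin_filter:
  assumes "msl0 P" "is_filter P F" shows "bot \<notin> F"
proof
  assume "bot \<in> F"
  then have "P \<subseteq> F" using assms unfolding is_filter_def by auto
  then show False using assms unfolding is_filter_def by auto
qed

lemma Ubas_subset_filters: "Ubas P x xs \<subseteq> filters P"
  by (auto simp: Ubas_def)

lemma Ubas_Int:
  assumes "x \<in> P" "y \<in> P"
  shows "Ubas P x xs \<inter> Ubas P y ys = Ubas P (inf x y) (xs \<union> ys)"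
proof -
  have "x \<in> F \<and> y \<in> F \<longleftrightarrow> inf x y \<in> F" if "F \<in> filters P" for F
  proof
    assume "inf x y \<in> F"
    moreover have "inf x y \<le> x" "inf x y \<le> y" by simp_all
    moreover have "\<forall>a\<in>F. \<forall>b\<in>P. a \<le> b \<longrightarrow> b \<in> F"
      using that unfolding filters_def is_filter_def by blast
    ultimately show "x \<in> F \<and> y \<in> F" using assms by blast
  qed (use that in \<open>auto simp: filters_def is_filter_def\<close>)
  then show ?thesis unfolding Ubas_def by blast
qed

lemma generate_topology_on_Ubas_basis_nbhd:
  assumes "generate_topology_on (Ubas_basis P) T" and "F \<in> T" and "F \<in> filters P"
  shows "\<exists>x xs. x \<in> P \<and> finite xs \<and> xs \<subseteq> P \<and> F \<in> Ubas P x xs \<and> Ubas P x xs \<subseteq> T"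
  using assms
proof (induction arbitrary: F)
  case Empty
  then show ?case by simp
next
  case (Int a b)
  obtain x xs where x: "x \<in> P" "finite xs" "xs \<subseteq> P" "F \<in> Ubas P x xs" "Ubas P x xs \<subseteq> a"
    using Int.IH(1) Int.prems by blast
  obtain y ys where y: "y \<in> P" "finite ys" "ys \<subseteq> P" "F \<in> Ubas P y ys" "Ubas P y ys \<subseteq> b"
    using Int.IH(2) Int.prems by blast
  have "F \<in> Ubas P (inf x y) (xs \<union> ys)" "Ubas P (inf x y) (xs \<union> ys) \<subseteq> a \<inter> b"
    using Ubas_Int[OF x(1) y(1), of xs ys] x(4,5) y(4,5) by blast+
  moreover have "inf x y \<in> P"
    using \<open>F \<in> filters P\<close> x(4) y(4) unfolding Ubas_def filters_def is_filter_def by blast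
  ultimately show ?case using x(2,3) y(2,3) by blast
next
  case (UN K)
  then obtain k where "k \<in> K" "F \<in> k" by blast
  with UN.IH[of k F] UN.prems show ?case by blast
next
  case (Basis s)
  then show ?case unfolding Ubas_basis_def by blast
qed

lemma topspace_FTop: "topspace (FTop P) = filters P"
proof -
  have "F \<in> \<Union>(Ubas_basis P)" if F: "F \<in> filters P" for F
  proof -
    obtain x where "x \<in> F" using F by (auto simp: filters_def is_filter_def)
    then have "F \<in> Ubas P x {}" "x \<in> P" using F by (auto simp: Ubas_def filters_def is_filter_def)
    then show ?thesis unfolding Ubas_basis_def by blast
  qed
  then show ?thesis unfolding FTop_Ubas_basis by auto
qed

lemma openin_FTop_Ubas:
  assumes "x \<in> P" "finite xs" "xs \<subseteq> P" shows "openin (FTop P) (Ubas P x xs)"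
proof -
  have "openin (topology_generated_by (Ubas_basis P)) (Ubas P x xs)"
    using assms by (intro topology_generated_by_Basis) (auto simp: Ubas_basis_def)
  then show ?thesis unfolding FTop_Ubas_basis using Ubas_subset_filters
    by (rule subset_openin_subtopology)
qed

lemma openin_FTop_imp_Ubas_nbhd:
  assumes "openin (FTop P) T" and "F \<in> T"
  shows "\<exists>x xs. x \<in> P \<and> finite xs \<and> xs \<subseteq> P \<and> F \<in> Ubas P x xs \<and> Ubas P x xs \<subseteq> T"
proof -
  obtain T' where T': "openin (topology_generated_by (Ubas_basis P)) T'" "T = T' \<inter> filters P"
    using assms(1) unfolding FTop_Ubas_basis openin_subtopology by blast
  have "F \<in> T'" "F \<in> filters P" using T'(2) assms(2) by blast+
  then obtain x xs where x: "x \<in> P" "finite xs" "xs \<subseteq> P" "F \<in> Ubas P x xs" "Ubas P x xs \<subseteq> T'"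
    using generate_topology_on_Ubas_basis_nbhd[OF openin_topology_generated_by[OF T'(1)]] by meson
  moreover have "Ubas P x xs \<subseteq> T" using x(5) T'(2) Ubas_subset_filters[of P x xs] by blast
  ultimately show ?thesis by blast
qed

lemma tight_subset_filters: "tight P \<subseteq> filters P"
  unfolding tight_def using closure_of_subset_topspace[of "FTop P"] unfolding topspace_FTop .

lemma topspace_TTop: "topspace (TTop P) = tight P"
  unfolding TTop_def topspace_subtopology topspace_FTop using tight_subset_filters by blast

lemma ultrafilters_subset_filters: "ultrafilters P \<subseteq> filters P"
  by (auto simp: ultrafilters_def)

lemma tight_iff_Ubas_meets_ultrafilters:
  "F \<in> tight P \<longleftrightarrow> F \<in> filters P \<and>
     (\<forall>x xs. x \<in> P \<and> finite xs \<and> xs \<subseteq> P \<and> F \<in> Ubas P x xs \<longrightarrow> Ubas P x xs \<inter> ultrafilters P \<noteq> {})"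
  (is "_ \<longleftrightarrow> _ \<and> ?basic")
proof -
  have "(\<forall>T. F \<in> T \<and> openin (FTop P) T \<longrightarrow> (\<exists>G. G \<in> ultrafilters P \<and> G \<in> T)) \<longleftrightarrow> ?basic"
    (is "?open \<longleftrightarrow> _")
  proof
    assume H: ?open
    show ?basic
    proof (intro allI impI)
      fix x xs assume "x \<in> P \<and> finite xs \<and> xs \<subseteq> P \<and> F \<in> Ubas P x xs"
      then have "F \<in> Ubas P x xs" "openin (FTop P) (Ubas P x xs)" by (auto intro: openin_FTop_Ubas)
      then obtain G where "G \<in> ultrafilters P" "G \<in> Ubas P x xs" using H by blast
      then show "Ubas P x xs \<inter> ultrafilters P \<noteq> {}" by blast
    qed
  next
    assume basic: ?basic
    show ?open
    proof (intro allI impI)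
      fix T assume "F \<in> T \<and> openin (FTop P) T"
      then obtain x xs where x: "x \<in> P" "finite xs" "xs \<subseteq> P" "F \<in> Ubas P x xs" "Ubas P x xs \<subseteq> T"
        using openin_FTop_imp_Ubas_nbhd by meson
      then obtain G where "G \<in> Ubas P x xs" "G \<in> ultrafilters P" using basic by blast
      then show "\<exists>G. G \<in> ultrafilters P \<and> G \<in> T" using x(5) by blast
    qed
  qed
  then show ?thesis unfolding tight_def in_closure_of topspace_FTop by simp
qed

lemma openin_TTop_iff:
  "openin (TTop P) W \<longleftrightarrow> W \<subseteq> tight P \<and>
     (\<forall>F\<in>W. \<exists>x xs. x \<in> P \<and> finite xs \<and> xs \<subseteq> P \<and> F \<in> Ubas P x xs \<and> Ubas P x xs \<inter> tight P \<subseteq> W)"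
  (is "_ \<longleftrightarrow> _ \<and> (\<forall>F\<in>W. \<exists>x xs. ?nbhd F x xs)")
proof
  assume "openin (TTop P) W"
  then obtain T where T: "openin (FTop P) T" "W = T \<inter> tight P"
    unfolding TTop_def openin_subtopology by blast
  show "W \<subseteq> tight P \<and> (\<forall>F\<in>W. \<exists>x xs. ?nbhd F x xs)"
  proof (intro conjI ballI)
    show "W \<subseteq> tight P" using T(2) by simp
    fix F assume "F \<in> W"
    then have "F \<in> T" using T(2) by simp
    then obtain x xs where x: "x \<in> P" "finite xs" "xs \<subseteq> P" "F \<in> Ubas P x xs" "Ubas P x xs \<subseteq> T"
      using openin_FTop_imp_Ubas_nbhd[OF T(1)] by meson
    moreover have "Ubas P x xs \<inter> tight P \<subseteq> W" using x(5) T(2) by auto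
    ultimately show "\<exists>x xs. ?nbhd F x xs" by blast
  qed
next
  assume W: "W \<subseteq> tight P \<and> (\<forall>F\<in>W. \<exists>x xs. ?nbhd F x xs)"
  define K where "K = {Ubas P x xs | x xs. x \<in> P \<and> finite xs \<and> xs \<subseteq> P \<and> Ubas P x xs \<inter> tight P \<subseteq> W}"
  have "W \<subseteq> \<Union>K" using W unfolding K_def by blast
  moreover have "\<Union>K \<inter> tight P \<subseteq> W" unfolding K_def by blast
  ultimately have W_eq: "W = \<Union>K \<inter> tight P" using W by blast
  have "openin (FTop P) (\<Union>K)"
    by (rule openin_Union) (auto simp: K_def intro: openin_FTop_Ubas)
  then show "openin (TTop P) W"
    unfolding TTop_def openin_subtopology by (intro exI[of _ "\<Union>K"] conjI W_eq)
qed

lemma Hausdorff_TTop: "Hausdorff_space (TTop P)"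
proof -
  have separate: "\<exists>U V. openin (FTop P) U \<and> openin (FTop P) V \<and> F \<in> U \<and> G \<in> V \<and> disjnt U V"
    if F: "F \<in> filters P" and G: "G \<in> filters P" and y: "y \<in> F" "y \<notin> G" for F G y
  proof -
    obtain z where z: "z \<in> G" using G unfolding filters_def is_filter_def by blast
    have "y \<in> P" "z \<in> P" using F G y z unfolding filters_def is_filter_def by blast+
    then have "openin (FTop P) (Ubas P y {})" "openin (FTop P) (Ubas P z {y})"
      by (auto intro: openin_FTop_Ubas)
    moreover have "F \<in> Ubas P y {}" "G \<in> Ubas P z {y}" using F G y z unfolding Ubas_def by blast+
    moreover have "disjnt (Ubas P y {}) (Ubas P z {y})" unfolding disjnt_def Ubas_def by blast
    ultimately show ?thesis by blast
  qed
  have "Hausdorff_space (FTop P)"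
    unfolding Hausdorff_space_def topspace_FTop
  proof (intro allI impI)
    fix F G assume FG: "F \<in> filters P \<and> G \<in> filters P \<and> F \<noteq> G"
    then obtain y where "y \<in> F \<and> y \<notin> G \<or> y \<in> G \<and> y \<notin> F" by blast
    then show "\<exists>U V. openin (FTop P) U \<and> openin (FTop P) V \<and> F \<in> U \<and> G \<in> V \<and> disjnt U V"
    proof
      assume "y \<in> F \<and> y \<notin> G"
      then show ?thesis using FG separate[of F G y] by blast
    next
      assume "y \<in> G \<and> y \<notin> F"
      then obtain U V where "openin (FTop P) U" "openin (FTop P) V" "G \<in> U" "F \<in> V" "disjnt U V"
        using FG separate[of G F y] by blast
      then show ?thesis using disjnt_sym by blast
    qed
  qed
  then show ?thesis unfolding TTop_def by (rule Hausdorff_space_subtopology)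
qed

lemma Tc_subset_tight: "U \<in> Tc P \<Longrightarrow> U \<subseteq> tight P"
  unfolding Tc_def by (metis openin_subset topspace_TTop mem_Collect_eq)

lemma Tc_Un: "U \<in> Tc P \<Longrightarrow> V \<in> Tc P \<Longrightarrow> U \<union> V \<in> Tc P"
  unfolding Tc_def by (blast intro: openin_Un compactin_Un)

lemma Tc_Int: "U \<in> Tc P \<Longrightarrow> V \<in> Tc P \<Longrightarrow> U \<inter> V \<in> Tc P"
  unfolding Tc_def using compactin_Int[OF Hausdorff_TTop] by (blast intro: openin_Int)

locale down_closed_inclusion =
  fixes P1 P2 :: "'a::{semilattice_inf,order_bot} set"
  assumes msl0_P1: "msl0 P1" and msl0_P2: "msl0 P2"
    and subset: "P1 \<subseteq> P2" and down_closed: "down_closed P1 P2"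
begin

definition up_closure :: "'a set \<Rightarrow> 'a set" where
  "up_closure E = {y \<in> P2. \<exists>x\<in>E. x \<le> y}"

definition re_domain :: "'a set set" where
  "re_domain = {\<xi> \<in> tight P2. \<xi> \<inter> P1 \<noteq> {}}"

lemma down_closedD: "x \<in> P1 \<Longrightarrow> y \<in> P2 \<Longrightarrow> y \<le> x \<Longrightarrow> y \<in> P1"
  using down_closed by (auto simp: down_closed_def)

lemma restrict_in_filters:
  assumes F: "F \<in> filters P2" and ne: "F \<inter> P1 \<noteq> {}" shows "F \<inter> P1 \<in> filters P1"
proof -
  have "bot \<notin> F" using bot_notin_filter[OF msl0_P2] F by (auto simp: filters_def)
  moreover have "bot \<in> P1" using msl0_P1 by (auto simp: msl0_def)
  ultimately have "F \<inter> P1 \<noteq> P1" by blast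
  moreover have "\<forall>x\<in>F \<inter> P1. \<forall>y\<in>P1. x \<le> y \<longrightarrow> y \<in> F \<inter> P1"
    using F subset unfolding filters_def is_filter_def by blast
  moreover have "\<forall>x\<in>F \<inter> P1. \<forall>y\<in>F \<inter> P1. inf x y \<in> F \<inter> P1"
    using F msl0_P1 unfolding filters_def is_filter_def msl0_def by blast
  ultimately show ?thesis using ne unfolding filters_def is_filter_def by blast
qed

lemma up_closure_in_filters:
  assumes E: "E \<in> filters P1" shows "up_closure E \<in> filters P2"
proof -
  have "bot \<notin> E" using bot_notin_filter[OF msl0_P1] E by (auto simp: filters_def)
  then have "bot \<notin> up_closure E" by (auto simp: up_closure_def bot_unique)
  moreover have "bot \<in> P2" using msl0_P2 by (auto simp: msl0_def)
  moreover have "up_closure E \<noteq> {}"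
    using E subset unfolding filters_def is_filter_def up_closure_def by blast
  moreover have "inf a b \<in> up_closure E" if ab: "a \<in> up_closure E" "b \<in> up_closure E" for a b
  proof -
    obtain x1 x2 where x: "x1 \<in> E" "x2 \<in> E" "x1 \<le> a" "x2 \<le> b"
      using ab unfolding up_closure_def by blast
    have "inf a b \<in> P2" using ab msl0_P2 by (auto simp: up_closure_def msl0_def)
    moreover have "inf x1 x2 \<in> E" using E x(1,2) by (auto simp: filters_def is_filter_def)
    moreover have "inf x1 x2 \<le> inf a b" using x(3,4) by (rule inf_mono)
    ultimately show ?thesis unfolding up_closure_def by blast
  qed
  moreover have "\<forall>x\<in>up_closure E. \<forall>y\<in>P2. x \<le> y \<longrightarrow> y \<in> up_closure E"
    unfolding up_closure_def by (blast intro: order_trans)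
  moreover have "up_closure E \<subseteq> P2" unfolding up_closure_def by blast
  ultimately show ?thesis unfolding filters_def is_filter_def by blast
qed

lemma up_closure_restrict: "E \<in> filters P1 \<Longrightarrow> up_closure E \<inter> P1 = E"
  using subset by (auto simp: up_closure_def filters_def is_filter_def)

lemma restrict_up_closure:
  assumes F: "F \<in> filters P2" and ne: "F \<inter> P1 \<noteq> {}" shows "up_closure (F \<inter> P1) = F"
proof
  show "up_closure (F \<inter> P1) \<subseteq> F" using F by (auto simp: up_closure_def filters_def is_filter_def)
  show "F \<subseteq> up_closure (F \<inter> P1)"
  proof
    fix y assume y: "y \<in> F"
    obtain x where x: "x \<in> F" "x \<in> P1" using ne by blast
    have "inf x y \<in> F" "y \<in> P2" using F x y by (auto simp: filters_def is_filter_def)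
    moreover from this have "inf x y \<in> P1" using down_closedD[OF x(2)] F
      by (auto simp: filters_def is_filter_def)
    ultimately show "y \<in> up_closure (F \<inter> P1)" unfolding up_closure_def by (blast intro: inf.cobounded2)
  qed
qed

lemma up_closure_in_ultrafilters:
  assumes E: "E \<in> ultrafilters P1" shows "up_closure E \<in> ultrafilters P2"
proof -
  have Ef: "E \<in> filters P1" using E by (auto simp: ultrafilters_def)
  have "G = up_closure E" if G: "G \<in> filters P2" "up_closure E \<subseteq> G" for G
  proof -
    have EG: "E \<subseteq> G \<inter> P1" using up_closure_restrict[OF Ef] G(2) by blast
    moreover have "E \<noteq> {}" using Ef by (auto simp: filters_def is_filter_def)
    ultimately have ne: "G \<inter> P1 \<noteq> {}" by blast
    have "G \<inter> P1 = E"
      using E restrict_in_filters[OF G(1) ne] EG by (auto simp: ultrafilters_def)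
    then show ?thesis using restrict_up_closure[OF G(1) ne] by simp
  qed
  then show ?thesis using up_closure_in_filters[OF Ef] by (auto simp: ultrafilters_def)
qed

lemma restrict_in_ultrafilters:
  assumes F: "F \<in> ultrafilters P2" and ne: "F \<inter> P1 \<noteq> {}"
  shows "F \<inter> P1 \<in> ultrafilters P1"
proof -
  have Ff: "F \<in> filters P2" using F by (auto simp: ultrafilters_def)
  have "G = F \<inter> P1" if G: "G \<in> filters P1" "F \<inter> P1 \<subseteq> G" for G
  proof -
    have "F \<subseteq> up_closure G"
      using restrict_up_closure[OF Ff ne] G(2) unfolding up_closure_def by blast
    then have "up_closure G = F" using F up_closure_in_filters[OF G(1)] by (auto simp: ultrafilters_def)
    then show ?thesis using up_closure_restrict[OF G(1)] by simp
  qed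
  then show ?thesis using restrict_in_filters[OF Ff ne] by (auto simp: ultrafilters_def)
qed

lemma restrict_in_Ubas_iff:
  assumes F: "F \<in> filters P2" and x: "x \<in> P1" and xs: "xs \<subseteq> P1"
  shows "F \<in> Ubas P2 x xs \<longleftrightarrow> F \<inter> P1 \<noteq> {} \<and> F \<inter> P1 \<in> Ubas P1 x xs"
  using F x xs restrict_in_filters[OF F] by (auto simp: Ubas_def)

text \<open>A basic neighbourhood \<open>Ubas P2 y ys\<close> of \<open>up_closure E\<close> pulls back to the basic
  neighbourhood \<open>Ubas P1 x (inf x ` ys)\<close> of \<open>E\<close>, for any \<open>x \<in> E\<close> below \<open>y\<close>; downward
  closure is what puts the new excluded elements \<open>inf x w\<close> into \<open>P1\<close>.\<close>
lemma up_closure_Ubas_pullback: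
  assumes E: "E \<in> filters P1" and ys: "finite ys" "ys \<subseteq> P2"
    and u: "up_closure E \<in> Ubas P2 y ys"
  obtains x where "x \<in> P1" "finite (inf x ` ys)" "inf x ` ys \<subseteq> P1" "E \<in> Ubas P1 x (inf x ` ys)"
    "\<And>E'. E' \<in> filters P1 \<Longrightarrow> E' \<in> Ubas P1 x (inf x ` ys) \<Longrightarrow> up_closure E' \<in> Ubas P2 y ys"
proof -
  obtain x where x: "x \<in> E" "x \<le> y" using u by (auto simp: Ubas_def up_closure_def)
  have xP: "x \<in> P1" using x E by (auto simp: filters_def is_filter_def)
  have ysP: "inf x ` ys \<subseteq> P1"
    using xP subset ys(2) msl0_P2 down_closedD[OF xP] by (auto simp: msl0_def subset_iff)
  have "inf x w \<notin> E" if w: "w \<in> ys" for w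
  proof
    assume "inf x w \<in> E"
    then have "w \<in> up_closure E" using w ys(2) unfolding up_closure_def by (blast intro: inf.cobounded2)
    then show False using w u by (auto simp: Ubas_def)
  qed
  then have E_in: "E \<in> Ubas P1 x (inf x ` ys)" using E x by (auto simp: Ubas_def)
  have pull: "up_closure E' \<in> Ubas P2 y ys"
    if E': "E' \<in> filters P1" "E' \<in> Ubas P1 x (inf x ` ys)" for E'
  proof -
    have "w \<notin> up_closure E'" if w: "w \<in> ys" for w
    proof
      assume "w \<in> up_closure E'"
      then obtain x' where x': "x' \<in> E'" "x' \<le> w" by (auto simp: up_closure_def)
      have "x \<in> E'" using E' by (auto simp: Ubas_def)
      then have "inf x x' \<in> E'" using E' x' by (auto simp: filters_def is_filter_def)
      moreover have "inf x x' \<le> inf x w" using x' by (simp add: le_infI2)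
      ultimately have "inf x w \<in> E'" using E' ysP w unfolding filters_def is_filter_def by blast
      then show False using E' w by (auto simp: Ubas_def)
    qed
    moreover have "y \<in> up_closure E'" using E' x u by (auto simp: up_closure_def Ubas_def)
    ultimately show ?thesis using up_closure_in_filters[OF E'(1)] by (auto simp: Ubas_def)
  qed
  show thesis by (rule that[OF xP _ ysP E_in pull]) (use ys(1) in simp_all)
qed

lemma up_closure_in_tight:
  assumes E: "E \<in> tight P1" shows "up_closure E \<in> tight P2"
  unfolding tight_iff_Ubas_meets_ultrafilters[of _ P2]
proof (intro conjI allI impI)
  have Ef: "E \<in> filters P1" using E tight_subset_filters by blast
  then show "up_closure E \<in> filters P2" by (rule up_closure_in_filters)
  fix y ys assume "y \<in> P2 \<and> finite ys \<and> ys \<subseteq> P2 \<and> up_closure E \<in> Ubas P2 y ys"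
  then obtain x where x: "x \<in> P1" "finite (inf x ` ys)" "inf x ` ys \<subseteq> P1" "E \<in> Ubas P1 x (inf x ` ys)"
    "\<And>E'. E' \<in> filters P1 \<Longrightarrow> E' \<in> Ubas P1 x (inf x ` ys) \<Longrightarrow> up_closure E' \<in> Ubas P2 y ys"
    using up_closure_Ubas_pullback[OF Ef] by blast
  then obtain V where "V \<in> Ubas P1 x (inf x ` ys)" "V \<in> ultrafilters P1"
    using E unfolding tight_iff_Ubas_meets_ultrafilters[of _ P1] by blast
  then have "up_closure V \<in> Ubas P2 y ys \<inter> ultrafilters P2"
    using x(5) ultrafilters_subset_filters up_closure_in_ultrafilters by blast
  then show "Ubas P2 y ys \<inter> ultrafilters P2 \<noteq> {}" by blast
qed

lemma restrict_in_tight: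
  assumes F: "F \<in> tight P2" and ne: "F \<inter> P1 \<noteq> {}" shows "F \<inter> P1 \<in> tight P1"
  unfolding tight_iff_Ubas_meets_ultrafilters[of _ P1]
proof (intro conjI allI impI)
  have Ff: "F \<in> filters P2" using F tight_subset_filters by blast
  then show "F \<inter> P1 \<in> filters P1" using ne by (rule restrict_in_filters)
  fix x xs assume a: "x \<in> P1 \<and> finite xs \<and> xs \<subseteq> P1 \<and> F \<inter> P1 \<in> Ubas P1 x xs"
  then have "F \<in> Ubas P2 x xs" using restrict_in_Ubas_iff[OF Ff] ne by blast
  then obtain G where G: "G \<in> Ubas P2 x xs" "G \<in> ultrafilters P2"
    using F a subset unfolding tight_iff_Ubas_meets_ultrafilters[of _ P2] by blast
  then have "G \<inter> P1 \<noteq> {}" "G \<inter> P1 \<in> Ubas P1 x xs"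
    using restrict_in_Ubas_iff a ultrafilters_subset_filters by blast+
  moreover from this have "G \<inter> P1 \<in> ultrafilters P1" using restrict_in_ultrafilters G(2) by blast
  ultimately show "Ubas P1 x xs \<inter> ultrafilters P1 \<noteq> {}" by blast
qed

lemma re_pre_subset_re_domain: "re_pre P1 P2 U \<subseteq> re_domain"
  unfolding re_pre_def re_domain_def by blast

lemma re_pre_eq_image_up_closure:
  assumes "U \<subseteq> tight P1" shows "re_pre P1 P2 U = up_closure ` U"
proof
  show "re_pre P1 P2 U \<subseteq> up_closure ` U"
    using restrict_up_closure tight_subset_filters unfolding re_pre_def by (blast intro: sym)
  have "up_closure E \<in> re_pre P1 P2 U" if "E \<in> U" for E
  proof -
    have E: "E \<in> tight P1" "E \<in> filters P1" using that assms tight_subset_filters by blast+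
    then have "E \<noteq> {}" unfolding filters_def is_filter_def by blast
    then show ?thesis
      using that up_closure_restrict[OF E(2)] up_closure_in_tight[OF E(1)] unfolding re_pre_def by simp
  qed
  then show "up_closure ` U \<subseteq> re_pre P1 P2 U" by blast
qed

lemma openin_re_pre:
  assumes U: "openin (TTop P1) U" shows "openin (TTop P2) (re_pre P1 P2 U)"
  unfolding openin_TTop_iff[of P2]
proof (intro conjI ballI)
  show "re_pre P1 P2 U \<subseteq> tight P2" unfolding re_pre_def by blast
  fix \<xi> assume "\<xi> \<in> re_pre P1 P2 U"
  then have \<xi>: "\<xi> \<in> filters P2" "\<xi> \<inter> P1 \<noteq> {}" "\<xi> \<inter> P1 \<in> U"
    using tight_subset_filters unfolding re_pre_def by blast+
  obtain x xs where x: "x \<in> P1" "finite xs" "xs \<subseteq> P1" "\<xi> \<inter> P1 \<in> Ubas P1 x xs"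
    "Ubas P1 x xs \<inter> tight P1 \<subseteq> U"
    using U \<xi>(3) unfolding openin_TTop_iff[of P1] by blast
  have "\<xi> \<in> Ubas P2 x xs" using restrict_in_Ubas_iff[OF \<xi>(1) x(1,3)] \<xi>(2) x(4) by blast
  moreover have "Ubas P2 x xs \<inter> tight P2 \<subseteq> re_pre P1 P2 U"
  proof
    fix \<zeta> assume \<zeta>: "\<zeta> \<in> Ubas P2 x xs \<inter> tight P2"
    then have "\<zeta> \<inter> P1 \<noteq> {}" "\<zeta> \<inter> P1 \<in> Ubas P1 x xs"
      using restrict_in_Ubas_iff[OF _ x(1,3)] tight_subset_filters by blast+
    moreover from this have "\<zeta> \<inter> P1 \<in> tight P1" using restrict_in_tight \<zeta> by blast
    ultimately show "\<zeta> \<in> re_pre P1 P2 U" unfolding re_pre_def using \<zeta> x(5) by blast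
  qed
  ultimately show "\<exists>x xs. x \<in> P2 \<and> finite xs \<and> xs \<subseteq> P2 \<and> \<xi> \<in> Ubas P2 x xs \<and>
      Ubas P2 x xs \<inter> tight P2 \<subseteq> re_pre P1 P2 U"
    using x(1-3) subset by blast
qed

lemma openin_re_domain: "openin (TTop P2) re_domain"
proof -
  have "re_domain = re_pre P1 P2 (tight P1)"
    using restrict_in_tight unfolding re_domain_def re_pre_def by blast
  then show ?thesis using openin_re_pre openin_topspace[of "TTop P1"] by (simp add: topspace_TTop)
qed

lemma continuous_map_up_closure: "continuous_map (TTop P1) (TTop P2) up_closure"
  unfolding continuous_map topspace_TTop
proof (intro conjI allI impI)
  show "up_closure ` tight P1 \<subseteq> tight P2" using up_closure_in_tight by blast
  fix W assume W: "openin (TTop P2) W"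
  show "openin (TTop P1) {E \<in> tight P1. up_closure E \<in> W}"
    unfolding openin_TTop_iff[of P1]
  proof (intro conjI ballI)
    fix E assume "E \<in> {E \<in> tight P1. up_closure E \<in> W}"
    then have E: "E \<in> tight P1" "E \<in> filters P1" "up_closure E \<in> W" using tight_subset_filters by blast+
    obtain y ys where y: "finite ys" "ys \<subseteq> P2" "up_closure E \<in> Ubas P2 y ys"
      "Ubas P2 y ys \<inter> tight P2 \<subseteq> W"
      using W E(3) unfolding openin_TTop_iff[of P2] by blast
    obtain x where x: "x \<in> P1" "finite (inf x ` ys)" "inf x ` ys \<subseteq> P1" "E \<in> Ubas P1 x (inf x ` ys)"
      "\<And>E'. E' \<in> filters P1 \<Longrightarrow> E' \<in> Ubas P1 x (inf x ` ys) \<Longrightarrow> up_closure E' \<in> Ubas P2 y ys"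
      using up_closure_Ubas_pullback[OF E(2) y(1-3)] by blast
    have "Ubas P1 x (inf x ` ys) \<inter> tight P1 \<subseteq> {E \<in> tight P1. up_closure E \<in> W}"
      using x(5) y(4) up_closure_in_tight tight_subset_filters by blast
    then show "\<exists>x xs. x \<in> P1 \<and> finite xs \<and> xs \<subseteq> P1 \<and> E \<in> Ubas P1 x xs \<and>
        Ubas P1 x xs \<inter> tight P1 \<subseteq> {E \<in> tight P1. up_closure E \<in> W}"
      using x(1-4) by blast
  qed blast
qed

lemma continuous_map_restrict:
  "continuous_map (subtopology (TTop P2) re_domain) (TTop P1) (\<lambda>\<xi>. \<xi> \<inter> P1)"
  unfolding continuous_map
proof (intro conjI allI impI)
  have dom: "topspace (subtopology (TTop P2) re_domain) = re_domain"
    unfolding topspace_subtopology topspace_TTop re_domain_def by blast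
  then show "(\<lambda>\<xi>. \<xi> \<inter> P1) ` topspace (subtopology (TTop P2) re_domain) \<subseteq> topspace (TTop P1)"
    unfolding topspace_TTop re_domain_def using restrict_in_tight by blast
  fix W assume "openin (TTop P1) W"
  moreover have "{\<xi> \<in> topspace (subtopology (TTop P2) re_domain). \<xi> \<inter> P1 \<in> W} = re_pre P1 P2 W"
    unfolding dom unfolding re_domain_def re_pre_def by blast
  ultimately show "openin (subtopology (TTop P2) re_domain)
      {\<xi> \<in> topspace (subtopology (TTop P2) re_domain). \<xi> \<inter> P1 \<in> W}"
    using openin_re_pre re_pre_subset_re_domain by (simp add: subset_openin_subtopology)
qed

lemma homeomorphic_maps_up_closure:
  "homeomorphic_maps (TTop P1) (subtopology (TTop P2) re_domain) up_closure (\<lambda>\<xi>. \<xi> \<inter> P1)"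
  unfolding homeomorphic_maps_def
proof (intro conjI ballI continuous_map_restrict)
  show "continuous_map (TTop P1) (subtopology (TTop P2) re_domain) up_closure"
    unfolding continuous_map_in_subtopology
    using continuous_map_up_closure re_pre_eq_image_up_closure[of "tight P1"] re_pre_subset_re_domain
    by (auto simp: topspace_TTop)
  show "up_closure E \<inter> P1 = E" if "E \<in> topspace (TTop P1)" for E
    using that up_closure_restrict tight_subset_filters by (auto simp: topspace_TTop)
  show "up_closure (\<xi> \<inter> P1) = \<xi>" if "\<xi> \<in> topspace (subtopology (TTop P2) re_domain)" for \<xi>
    using that restrict_up_closure tight_subset_filters by (auto simp: topspace_TTop re_domain_def)
qed

lemma homeomorphic_map_up_closure:
  "homeomorphic_map (TTop P1) (subtopology (TTop P2) re_domain) up_closure"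
  using homeomorphic_maps_up_closure by (rule homeomorphic_maps_imp_map)

lemma re_pre_in_Tc: assumes U: "U \<in> Tc P1" shows "re_pre P1 P2 U \<in> Tc P2"
proof -
  have Ut: "U \<subseteq> topspace (TTop P1)" using Tc_subset_tight[OF U] by (simp add: topspace_TTop)
  have "openin (subtopology (TTop P2) re_domain) (up_closure ` U)"
    "compactin (subtopology (TTop P2) re_domain) (up_closure ` U)"
    using U homeomorphic_map_openness[OF homeomorphic_map_up_closure Ut]
      homeomorphic_map_compactness[OF homeomorphic_map_up_closure Ut] by (auto simp: Tc_def)
  then show ?thesis
    using openin_trans_full[OF _ openin_re_domain] re_pre_eq_image_up_closure[OF Tc_subset_tight[OF U]]
    by (simp add: Tc_def compactin_subtopology)
qed

lemma inj_on_re_pre: "inj_on (re_pre P1 P2) (Tc P1)"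
proof (rule inj_onI)
  have inj: "inj_on up_closure (tight P1)"
    using homeomorphic_imp_injective_map[OF homeomorphic_map_up_closure] by (simp add: topspace_TTop)
  fix U V assume U: "U \<in> Tc P1" and V: "V \<in> Tc P1" and eq: "re_pre P1 P2 U = re_pre P1 P2 V"
  then have "up_closure ` U = up_closure ` V"
    using re_pre_eq_image_up_closure[OF Tc_subset_tight] by metis
  then show "U = V"
    using inj_on_image_eq_iff[OF inj Tc_subset_tight[OF U] Tc_subset_tight[OF V]] by simp
qed

lemma re_pre_Un: "re_pre P1 P2 (U \<union> V) = re_pre P1 P2 U \<union> re_pre P1 P2 V"
  unfolding re_pre_def by blast

lemma re_pre_Int_Tc:
  assumes U: "U \<in> Tc P1" and W: "W \<in> Tc P2"
  shows "re_pre P1 P2 U \<inter> W \<in> re_pre P1 P2 ` Tc P1"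
proof -
  let ?A = "re_pre P1 P2 U \<inter> W"
  define V where "V = (\<lambda>\<xi>. \<xi> \<inter> P1) ` ?A"
  have A_dom: "?A \<subseteq> re_domain" using re_pre_subset_re_domain by blast
  have V_tight: "V \<subseteq> topspace (TTop P1)"
    using A_dom restrict_in_tight unfolding V_def re_domain_def topspace_TTop by blast
  have "up_closure (\<xi> \<inter> P1) = \<xi>" if "\<xi> \<in> ?A" for \<xi>
    using that A_dom restrict_up_closure tight_subset_filters unfolding re_domain_def by blast
  then have up_V: "up_closure ` V = ?A"
    unfolding V_def image_image using image_cong[of ?A ?A _ "\<lambda>\<xi>. \<xi>"] by simp
  have "?A \<in> Tc P2" using Tc_Int[OF re_pre_in_Tc[OF U] W] .
  then have "openin (subtopology (TTop P2) re_domain) (up_closure ` V)"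
    "compactin (subtopology (TTop P2) re_domain) (up_closure ` V)"
    unfolding up_V Tc_def using A_dom subset_openin_subtopology compactin_subtopology by blast+
  then have "V \<in> Tc P1"
    using homeomorphic_map_openness[OF homeomorphic_map_up_closure V_tight]
      homeomorphic_map_compactness[OF homeomorphic_map_up_closure V_tight] by (simp add: Tc_def)
  moreover have "re_pre P1 P2 V = ?A"
    using re_pre_eq_image_up_closure V_tight up_V by (simp add: topspace_TTop)
  ultimately show ?thesis by (metis imageI)
qed

lemma tight_inclusion: "tight_inclusion P1 P2"
  unfolding tight_inclusion_def
proof (intro conjI ballI impI inj_on_re_pre)
  show "\<xi> \<inter> P1 \<in> tight P1" if "\<xi> \<in> tight P2" "\<xi> \<inter> P1 \<noteq> {}" for \<xi>
    using that by (rule restrict_in_tight)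
  show "re_pre P1 P2 U \<in> Tc P2" if "U \<in> Tc P1" for U
    using that by (rule re_pre_in_Tc)
  show "A \<union> B \<in> re_pre P1 P2 ` Tc P1" if AB: "A \<in> re_pre P1 P2 ` Tc P1" "B \<in> re_pre P1 P2 ` Tc P1" for A B
  proof -
    obtain U V where UV: "U \<in> Tc P1" "V \<in> Tc P1" "A = re_pre P1 P2 U" "B = re_pre P1 P2 V"
      using AB by blast
    have "U \<union> V \<in> Tc P1" using UV(1,2) by (rule Tc_Un)
    then show ?thesis unfolding UV(3,4) re_pre_Un[symmetric] by (rule imageI)
  qed
  show "A \<inter> W \<in> re_pre P1 P2 ` Tc P1" if "A \<in> re_pre P1 P2 ` Tc P1" "W \<in> Tc P2" for A W
    using that(1) re_pre_Int_Tc[OF _ that(2)] by (elim imageE) simp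
qed

lemma preserves_finite_covers: "preserves_finite_covers P1 P2"
  unfolding preserves_finite_covers_def
proof (intro ballI allI impI)
  fix x C assume x: "x \<in> P1" and C: "finite_cover P1 x C"
  have "\<exists>c\<in>C. inf y c \<noteq> bot" if "y \<in> P2" "y \<noteq> bot" "y \<le> x" for y
    using C that down_closedD[OF x] unfolding finite_cover_def by blast
  then show "finite_cover P2 x C" using C subset unfolding finite_cover_def by blast
qed

lemma re_pre_Vbas:
  assumes x: "x \<in> P1" shows "re_pre P1 P2 (Vbas P1 x {}) = Vbas P2 x {}"
proof (rule set_eqI)
  fix \<xi>
  show "\<xi> \<in> re_pre P1 P2 (Vbas P1 x {}) \<longleftrightarrow> \<xi> \<in> Vbas P2 x {}"
  proof (cases "\<xi> \<in> tight P2")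
    case True
    then have "\<xi> \<in> Ubas P2 x {} \<longleftrightarrow> \<xi> \<inter> P1 \<noteq> {} \<and> \<xi> \<inter> P1 \<in> Ubas P1 x {}"
      using restrict_in_Ubas_iff[OF _ x] tight_subset_filters by blast
    then show ?thesis unfolding re_pre_def Vbas_def using True restrict_in_tight by blast
  qed (simp add: re_pre_def Vbas_def)
qed

end

theorem mainTheorem10:
  fixes P1 P2 :: "'a::{semilattice_inf,order_bot} set"
  assumes "msl0 P1" and "msl0 P2" and "P1 \<subseteq> P2" and "down_closed P1 P2"
  shows "preserves_finite_covers P1 P2 \<and> tight_inclusion P1 P2
         \<and> (\<forall>x\<in>P1. re_pre P1 P2 (Vbas P1 x {}) = Vbas P2 x {})"
proof -
  interpret down_closed_inclusion P1 P2 using assms by unfold_locales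
  show ?thesis using preserves_finite_covers tight_inclusion re_pre_Vbas by blast
qed

end
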